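(* For $\alpha\in[-1,1]$ let $\rho(\alpha)=\tfrac12(I+\alpha\sigma_x)=\tfrac12\begin{pmatrix}1&\alpha\\\alpha&1\end{pmatrix}$. Then for all $\alpha,\beta\in[-1,1]$ and $p\ge1$, $$D^p_{z,p}(\rho(\alpha),\rho(\beta))=2^{p-1}\Big(1-\sqrt{1-\max(\alpha^2,\beta^2)}\Big).$$
   Context: Qubit setting: $\mathcal{H}=\mathbb{C}^2$, $\mathcal{H}^*$ is identified with $\mathbb{C}^2$ via the dual basis, and $A^T$ is the usual matrix transpose; operators on $\mathcal{H}\otimes\mathcal{H}^*$ are $4\times4$ matrices in the basis $e_1\otimes e_1^*,e_1\otimes e_2^*,e_2\otimes e_1^*,e_2\otimes e_2^*$. $\sigma_x=\begin{pmatrix}0&1\\1&0\end{pmatrix}$, $\sigma_y=\begin{pmatrix}0&-i\\i&0\end{pmatrix}$, $\sigma_z=\begin{pmatrix}1&0\\0&-1\end{pmatrix}$. The set of couplings of states $\rho,\omega$ is $\mathcal{C}(\rho,\omega)=\{\Pi\in\mathcal{S}(\mathcal{H}\otimes\mathcal{H}^* ):\mathrm{tr}_{\mathcal{H}^*}[\Pi]=\omega,\ \mathrm{tr}_{\mathcal{H}}[\Pi]=\rho^T\}$. For $p\ge1$, $C_{z,p}=|\sigma_z\otimes I^T-I\otimes\sigma_z^T|^p=2^{p-1}(I\otimes I^T-\sigma_z\otimes\sigma_z^T)=\mathrm{diag}(0,2^p,2^p,0)$, and $D_{z,p}(\rho,\omega)=\big(\min_{\Pi\in\mathcal{C}(\rho,\omega)}\mathrm{tr}[\Pi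 C_{z,p}]\big)^{1/p}$. *)

theory Defs
  imports Complex_Main
begin

text \<open>Matrices are represented as functions nat => nat => complex; only the entries
  with indices below the dimension (2 for operators on H, 4 for operators on H (x) H^* )
  are meaningful.  The basis of H (x) H^* is ordered
  e1(x)e1*, e1(x)e2*, e2(x)e1*, e2(x)e2*, i.e. e_i (x) e_j^* has index 2*i+j (i,j in {0,1}).\<close>

type_synonym cmat = "nat \<Rightarrow> nat \<Rightarrow> complex"

definition idx :: "nat \<Rightarrow> nat \<Rightarrow> nat" where
  "idx i j = 2 * i + j"

definition I2 :: cmat where
  "I2 = (\<lambda>i j. if i = j then 1 else 0)"

definition sigma_x :: cmat where
  "sigma_x = (\<lambda>i j. if (i = 0 \<and> j = 1) \<or> (i = 1 \<and> j = 0) then 1 else 0)"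

definition sigma_z :: cmat where
  "sigma_z = (\<lambda>i j. if i = 0 \<and> j = 0 then 1 else if i = 1 \<and> j = 1 then -1 else 0)"

definition mtranspose :: "cmat \<Rightarrow> cmat" where
  "mtranspose A = (\<lambda>i j. A j i)"

definition kron :: "cmat \<Rightarrow> cmat \<Rightarrow> cmat" where
  "kron A B = (\<lambda>m n. A (m div 2) (n div 2) * B (m mod 2) (n mod 2))"

definition mtrace :: "nat \<Rightarrow> cmat \<Rightarrow> complex" where
  "mtrace n A = (\<Sum>i<n. A i i)"

definition hermitian :: "nat \<Rightarrow> cmat \<Rightarrow> bool" where
  "hermitian n A \<longleftrightarrow> (\<forall>i<n. \<forall>k<n. A k i = cnj (A i k))"

definition psd :: "nat \<Rightarrow> cmat \<Rightarrow> bool" where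
  "psd n A \<longleftrightarrow> hermitian n A \<and>
     (\<forall>x :: nat \<Rightarrow> complex. 0 \<le> Re (\<Sum>i<n. \<Sum>k<n. cnj (x i) * A i k * x k))"

definition is_state :: "nat \<Rightarrow> cmat \<Rightarrow> bool" where
  "is_state n A \<longleftrightarrow> psd n A \<and> mtrace n A = 1"

definition ptrace_Hstar :: "cmat \<Rightarrow> cmat" where
  "ptrace_Hstar P = (\<lambda>i k. \<Sum>j<2. P (idx i j) (idx k j))"

definition ptrace_H :: "cmat \<Rightarrow> cmat" where
  "ptrace_H P = (\<lambda>j l. \<Sum>i<2. P (idx i j) (idx i l))"

definition couplings :: "cmat \<Rightarrow> cmat \<Rightarrow> cmat set" where
  "couplings \<rho> \<omega> = {P. is_state 4 P \<and>
      (\<forall>i<2. \<forall>k<2. ptrace_Hstar P i k = \<omega> i k) \<and>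
      (\<forall>j<2. \<forall>l<2. ptrace_H P j l = mtranspose \<rho> j l)}"

definition C_z :: "real \<Rightarrow> cmat" where
  "C_z p = (\<lambda>m n. complex_of_real (2 powr (p - 1)) *
      (kron I2 (mtranspose I2) m n - kron sigma_z (mtranspose sigma_z) m n))"

definition cost :: "cmat \<Rightarrow> cmat \<Rightarrow> real" where
  "cost P C = Re (mtrace 4 (\<lambda>m n. \<Sum>k<4. P m k * C k n))"

text \<open>D_{z,p}(rho, omega) = (min over couplings of tr[Pi C_{z,p}])^{1/p}; the minimum
  is written as an infimum (it is attained by compactness).\<close>
definition D_z :: "real \<Rightarrow> cmat \<Rightarrow> cmat \<Rightarrow> real" where
  "D_z p \<rho> \<omega> = (Inf ((\<lambda>P. cost P (C_z p)) ` couplings \<rho> \<omega>)) powr (1 / p)"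

definition rho :: "real \<Rightarrow> cmat" where
  "rho \<alpha> = (\<lambda>i j. (I2 i j + complex_of_real \<alpha> * sigma_x i j) / 2)"

end

theory Submission
  imports Defs
begin

text \<open>The marginal conditions force the diagonal of a coupling \<Pi> of \<rho>(\<alpha>) and \<rho>(\<beta>) to be
  (t, 1/2 - t, 1/2 - t, t), so that tr[\<Pi> C_{z,p}] = 2^{p-1} (2 - 4t), and they force
  \<Pi>_{02} + \<Pi>_{13} = \<beta>/2 and \<Pi>_{01} + \<Pi>_{23} = \<alpha>/2. Positivity bounds each of these four
  entries through a 2x2 principal minor, |\<Pi>_{ik}|^2 \<le> t (1/2 - t); hence
  max(\<alpha>^2, \<beta>^2) \<le> 8t - 16t^2, i.e. 4t - 1 \<le> sqrt(1 - max(\<alpha>^2, \<beta>^2)), which is the lower bound.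
  Writing s = sqrt(1 - max(\<alpha>^2, \<beta>^2)), the bound is attained by the real rank-two coupling
  v v^T + w w^T with v = (a, b, b, a) and w = (c, d, -d, -c), where a^2 + c^2 = (1 + s)/4,
  b^2 + d^2 = (1 - s)/4, ab = (\<alpha> + \<beta>)/8 and cd = (\<alpha> - \<beta>)/8. Such reals exist because
  |\<alpha> + \<beta>|/8 + |\<alpha> - \<beta>|/8 = max(|\<alpha>|, |\<beta>|)/4 is exactly the geometric mean of (1 + s)/4 and
  (1 - s)/4.\<close>

lemma discriminant_le_of_quadratic_form_nonneg:
  fixes a b c :: real
  assumes nonneg: "\<And>s t. 0 \<le> a * s\<^sup>2 + 2 * b * s * t + c * t\<^sup>2"
  shows "b\<^sup>2 \<le> a * c"
proof (cases "a = 0")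
  case True
  have "b = 0"
  proof (rule ccontr)
    assume "b \<noteq> 0"
    then show False using nonneg[of "- (c + 1) / (2 * b)" 1] True by simp
  qed
  then show ?thesis using True by simp
next
  case False
  then have "0 < a" using nonneg[of 1 0] by simp
  moreover have "0 \<le> a * (a * c - b\<^sup>2)"
    using nonneg[of "- b" a] by (simp add: power2_eq_square algebra_simps)
  ultimately show ?thesis by (simp add: zero_le_mult_iff)
qed

lemma power2_norm_add_le:
  fixes x y :: "'a::real_normed_vector"
  shows "(norm (x + y))\<^sup>2 \<le> 2 * (norm x)\<^sup>2 + 2 * (norm y)\<^sup>2"
proof -
  have "(norm (x + y))\<^sup>2 \<le> (norm x + norm y)\<^sup>2"
    by (simp add: norm_triangle_ineq power_mono)
  also have "\<dots> \<le> 2 * (norm x)\<^sup>2 + 2 * (norm y)\<^sup>2"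
    using sum_squares_ge_zero[of "norm x - norm y" 0] by (simp add: power2_eq_square algebra_simps)
  finally show ?thesis .
qed

lemma exists_scaled_factors:
  fixes a b X l :: real
  assumes "0 \<le> l" "0 \<le> a" "0 \<le> b" "\<bar>X\<bar> = l * sqrt (a * b)"
  shows "\<exists>x y. x\<^sup>2 = l * a \<and> y\<^sup>2 = l * b \<and> x * y = X"
proof -
  define \<sigma> :: real where "\<sigma> = (if X < 0 then -1 else 1)"
  have "sqrt (l * a) * sqrt (l * b) = sqrt (l\<^sup>2 * (a * b))"
    by (simp add: real_sqrt_mult[symmetric] power2_eq_square algebra_simps)
  also have "\<dots> = l * sqrt (a * b)"
    using assms(1) by (simp add: real_sqrt_mult)
  finally have "sqrt (l * a) * (\<sigma> * sqrt (l * b)) = X"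
    using assms(4) by (auto simp: \<sigma>_def abs_if)
  moreover have "(\<sigma> * sqrt (l * b))\<^sup>2 = l * b" "(sqrt (l * a))\<^sup>2 = l * a"
    using assms(1-3) by (simp_all add: \<sigma>_def power_mult_distrib)
  ultimately show ?thesis by blast
qed

lemma exists_factor_pairs:
  fixes a b X Y :: real
  assumes "0 \<le> a" "0 \<le> b" "\<bar>X\<bar> + \<bar>Y\<bar> = sqrt (a * b)"
  shows "\<exists>x y z w. x\<^sup>2 + z\<^sup>2 = a \<and> y\<^sup>2 + w\<^sup>2 = b \<and> x * y = X \<and> z * w = Y"
proof -
  obtain l m where lm: "0 \<le> l" "0 \<le> m" "l + m = 1"
    and "\<bar>X\<bar> = l * sqrt (a * b)" "\<bar>Y\<bar> = m * sqrt (a * b)"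
  proof (cases "sqrt (a * b) = 0")
    case True
    then have "X = 0" "Y = 0" using assms(3) by (auto simp: add_nonneg_eq_0_iff)
    then show ?thesis using True that[of 1 0] by simp
  next
    case False
    then have "0 < sqrt (a * b)" using assms(1,2) by simp
    then show ?thesis
      using assms(3) by (intro that[of "\<bar>X\<bar> / sqrt (a * b)" "\<bar>Y\<bar> / sqrt (a * b)"])
        (auto simp: add_divide_distrib[symmetric])
  qed
  then obtain x y z w where "x\<^sup>2 = l * a" "y\<^sup>2 = l * b" "x * y = X"
    and "z\<^sup>2 = m * a" "w\<^sup>2 = m * b" "z * w = Y"
    using exists_scaled_factors assms(1,2) by metis
  moreover have "l * a + m * a = a" "l * b + m * b = b"
    using lm(3) by (simp_all add: distrib_right[symmetric])
  ultimately show ?thesis by metis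
qed

lemma psd_form_on_subset_nonneg:
  assumes "psd n A" "S \<subseteq> {..<n}"
  shows "0 \<le> Re (\<Sum>j\<in>S. \<Sum>l\<in>S. cnj (x j) * A j l * x l)"
proof -
  define y where "y j = (if j \<in> S then x j else 0)" for j
  have inner: "(\<Sum>l<n. cnj (y j) * A j l * y l) = (\<Sum>l\<in>S. cnj (x j) * A j l * x l)"
    if "j \<in> S" for j
    using assms(2) that by (intro sum.mono_neutral_cong_right) (auto simp: y_def)
  have "(\<Sum>j<n. \<Sum>l<n. cnj (y j) * A j l * y l) = (\<Sum>j\<in>S. \<Sum>l\<in>S. cnj (x j) * A j l * x l)"
    using assms(2) by (intro sum.mono_neutral_cong_right) (auto simp: inner y_def)
  moreover have "0 \<le> Re (\<Sum>j<n. \<Sum>l<n. cnj (y j) * A j l * y l)"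
    using assms(1) unfolding psd_def by blast
  ultimately show ?thesis by simp
qed

lemma psd_diag_nonneg:
  assumes "psd n A" "i < n"
  shows "0 \<le> Re (A i i)"
  using psd_form_on_subset_nonneg[OF assms(1), of "{i}" "\<lambda>_. 1"] assms(2) by simp

lemma psd_two_point_form_nonneg:
  assumes "psd n A" "i < n" "k < n" "i \<noteq> k"
  shows "0 \<le> Re (cnj u * A i i * u + cnj u * A i k * v + cnj v * A k i * u + cnj v * A k k * v)"
  using psd_form_on_subset_nonneg[OF assms(1), of "{i, k}" "\<lambda>j. if j = i then u else v"] assms(2-4)
  by (simp add: add.assoc)

lemma psd_offdiag_norm_le:
  assumes psd: "psd n A" and "i < n" "k < n" "i \<noteq> k"
  shows "(cmod (A i k))\<^sup>2 \<le> Re (A i i) * Re (A k k)"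
proof -
  define a c b where "a = Re (A i i)" and "c = Re (A k k)" and "b = A i k"
  have real_diag: "A j j = of_real (Re (A j j))" if "j < n" for j
  proof -
    have "cnj (A j j) = A j j" using psd that unfolding psd_def hermitian_def by metis
    then show ?thesis by (metis Reals_cnj_iff of_real_Re)
  qed
  have entries: "A i i = of_real a" "A k k = of_real c" "A i k = b" "A k i = cnj b"
    using real_diag assms(2,3) psd unfolding a_def c_def b_def psd_def hermitian_def by blast+
  have "0 \<le> a * s\<^sup>2 + 2 * (cmod b)\<^sup>2 * s * t + (c * (cmod b)\<^sup>2) * t\<^sup>2" for s t
    using psd_two_point_form_nonneg[OF assms, of "of_real s" "of_real t * cnj b"]
    unfolding cmod_power2 by (simp add: entries power2_eq_square algebra_simps)
  then have "((cmod b)\<^sup>2)\<^sup>2 \<le> a * (c * (cmod b)\<^sup>2)"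
    by (rule discriminant_le_of_quadratic_form_nonneg)
  moreover have "0 \<le> a * c"
    using psd_diag_nonneg[OF psd] assms(2,3) unfolding a_def c_def by simp
  ultimately show ?thesis unfolding a_def c_def b_def
    by (cases "A i k = 0") (simp_all add: power2_eq_square mult.assoc[symmetric] mult_le_cancel_right)
qed

lemma psd_outer:
  "psd n (\<lambda>i k. v i * cnj (v k))"
  unfolding psd_def hermitian_def
proof (intro conjI allI impI)
  fix x :: "nat \<Rightarrow> complex"
  define S where "S = (\<Sum>i<n. cnj (x i) * v i)"
  have "(\<Sum>i<n. \<Sum>k<n. cnj (x i) * (v i * cnj (v k)) * x k) = S * cnj S"
    by (simp add: S_def cnj_sum sum_product algebra_simps)
  then show "0 \<le> Re (\<Sum>i<n. \<Sum>k<n. cnj (x i) * (v i * cnj (v k)) * x k)"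
    by (simp add: complex_mult_cnj)
qed simp

lemma psd_add:
  assumes "psd n A" "psd n B"
  shows "psd n (\<lambda>i k. A i k + B i k)"
  unfolding psd_def hermitian_def
proof (intro conjI allI impI)
  fix x :: "nat \<Rightarrow> complex"
  have "(\<Sum>i<n. \<Sum>k<n. cnj (x i) * (A i k + B i k) * x k)
      = (\<Sum>i<n. \<Sum>k<n. cnj (x i) * A i k * x k) + (\<Sum>i<n. \<Sum>k<n. cnj (x i) * B i k * x k)"
    by (simp add: algebra_simps sum.distrib)
  moreover have "0 \<le> Re (\<Sum>i<n. \<Sum>k<n. cnj (x i) * A i k * x k)"
    "0 \<le> Re (\<Sum>i<n. \<Sum>k<n. cnj (x i) * B i k * x k)"
    using assms unfolding psd_def by blast+
  ultimately show "0 \<le> Re (\<Sum>i<n. \<Sum>k<n. cnj (x i) * (A i k + B i k) * x k)"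
    by simp
next
  fix i k assume "i < n" "k < n"
  then have "A k i = cnj (A i k)" "B k i = cnj (B i k)"
    using assms unfolding psd_def hermitian_def by blast+
  then show "A k i + B k i = cnj (A i k + B i k)" by simp
qed

lemma mem_couplings_iff:
  "P \<in> couplings \<rho> \<omega> \<longleftrightarrow> is_state 4 P \<and>
     P 0 0 + P 1 1 = \<omega> 0 0 \<and> P 0 2 + P 1 3 = \<omega> 0 1 \<and>
     P 2 0 + P 3 1 = \<omega> 1 0 \<and> P 2 2 + P 3 3 = \<omega> 1 1 \<and>
     P 0 0 + P 2 2 = \<rho> 0 0 \<and> P 0 1 + P 2 3 = \<rho> 1 0 \<and>
     P 1 0 + P 3 2 = \<rho> 0 1 \<and> P 1 1 + P 3 3 = \<rho> 1 1"
  by (simp add: couplings_def ptrace_Hstar_def ptrace_H_def idx_def mtranspose_def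
      lessThan_nat_numeral All_less_Suc numeral_2_eq_2 numeral_3_eq_3 add.commute conj_ac)

lemma cost_C_z:
  "cost P (C_z p) = 2 powr (p - 1) * (2 * Re (P 1 1 + P 2 2))"
  by (simp add: cost_def mtrace_def C_z_def kron_def I2_def mtranspose_def sigma_z_def
      lessThan_nat_numeral algebra_simps)

lemma cost_C_z_nonneg:
  assumes "is_state 4 P"
  shows "0 \<le> cost P (C_z p)"
  using psd_diag_nonneg[of 4 P 1] psd_diag_nonneg[of 4 P 2] assms
  by (simp add: cost_C_z is_state_def)

lemma D_z_powr_eq_Inf_cost:
  assumes "p \<noteq> 0" "couplings \<rho> \<omega> \<noteq> {}"
  shows "D_z p \<rho> \<omega> powr p = Inf ((\<lambda>P. cost P (C_z p)) ` couplings \<rho> \<omega>)"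
proof -
  have "0 \<le> Inf ((\<lambda>P. cost P (C_z p)) ` couplings \<rho> \<omega>)"
    using assms(2) cost_C_z_nonneg by (intro cInf_greatest) (auto simp: couplings_def)
  then show ?thesis using assms(1) by (simp add: D_z_def powr_powr)
qed

lemma cost_C_z_lower_bound_rho:
  assumes "P \<in> couplings (rho \<alpha>) (rho \<beta>)"
  shows "2 powr (p - 1) * (1 - sqrt (1 - max (\<alpha>\<^sup>2) (\<beta>\<^sup>2))) \<le> cost P (C_z p)"
proof -
  have psd: "psd 4 P"
    and marg: "P 0 0 + P 1 1 = 1 / 2" "P 0 0 + P 2 2 = 1 / 2" "P 1 1 + P 3 3 = 1 / 2"
    and off: "P 0 2 + P 1 3 = of_real \<beta> / 2" "P 0 1 + P 2 3 = of_real \<alpha> / 2"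
    using assms by (simp_all add: mem_couplings_iff is_state_def rho_def I2_def sigma_x_def)
  define t where "t = Re (P 0 0)"
  have diag: "Re (P 0 0) = t" "Re (P 1 1) = 1 / 2 - t" "Re (P 2 2) = 1 / 2 - t" "Re (P 3 3) = t"
    using arg_cong[OF marg(1), of Re] arg_cong[OF marg(2), of Re] arg_cong[OF marg(3), of Re]
    by (simp_all add: t_def)
  have minor: "(cmod (P i k))\<^sup>2 \<le> t * (1 / 2 - t)"
    if "(i, k) \<in> {(0, 1), (0, 2), (1, 3), (2, 3)}" for i k
    using psd_offdiag_norm_le[OF psd, of i k] that diag by (auto simp: mult.commute)
  have bound: "\<gamma>\<^sup>2 \<le> 8 * t - 16 * t\<^sup>2"
    if "x + y = of_real \<gamma> / 2" "(cmod x)\<^sup>2 \<le> t * (1 / 2 - t)" "(cmod y)\<^sup>2 \<le> t * (1 / 2 - t)"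
    for x y \<gamma>
  proof -
    have "(\<gamma> / 2)\<^sup>2 = (cmod (x + y))\<^sup>2"
      unfolding that(1) by (simp add: norm_divide power_divide)
    also have "\<dots> \<le> 4 * (t * (1 / 2 - t))"
      using power2_norm_add_le[of x y] that(2,3) by simp
    finally show ?thesis by (simp add: power2_eq_square algebra_simps)
  qed
  have "max (\<alpha>\<^sup>2) (\<beta>\<^sup>2) \<le> 8 * t - 16 * t\<^sup>2"
    using bound[OF off(1) minor minor] bound[OF off(2) minor minor] by simp
  then have "(4 * t - 1)\<^sup>2 \<le> 1 - max (\<alpha>\<^sup>2) (\<beta>\<^sup>2)"
    by (simp add: power2_eq_square algebra_simps)
  then have "4 * t - 1 \<le> sqrt (1 - max (\<alpha>\<^sup>2) (\<beta>\<^sup>2))"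
    by (rule real_le_rsqrt)
  moreover have "cost P (C_z p) = 2 powr (p - 1) * (2 - 4 * t)"
    using diag by (simp add: cost_C_z)
  ultimately show ?thesis by simp
qed

lemma exists_rank_two_coupling_rho:
  fixes a b c d :: real
  assumes "a\<^sup>2 + c\<^sup>2 + (b\<^sup>2 + d\<^sup>2) = 1 / 2" "\<alpha> = 4 * (a * b + c * d)" "\<beta> = 4 * (a * b - c * d)"
  shows "\<exists>P \<in> couplings (rho \<alpha>) (rho \<beta>). cost P (C_z p) = 2 powr (p - 1) * (4 * (b\<^sup>2 + d\<^sup>2))"
proof -
  define v where "v i = complex_of_real ([a, b, b, a] ! i)" for i
  define w where "w i = complex_of_real ([c, d, -d, -c] ! i)" for i
  define P where "P i k = v i * cnj (v k) + w i * cnj (w k)" for i k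
  have "psd 4 P"
    unfolding P_def by (rule psd_add[OF psd_outer psd_outer])
  moreover have "mtrace 4 P = 1"
    using assms(1)
    by (simp add: mtrace_def lessThan_nat_numeral P_def v_def w_def complex_eq_iff power2_eq_square)
  ultimately have "P \<in> couplings (rho \<alpha>) (rho \<beta>)"
    using assms
    by (simp add: mem_couplings_iff is_state_def rho_def I2_def sigma_x_def P_def v_def w_def
        complex_eq_iff power2_eq_square algebra_simps)
  moreover have "cost P (C_z p) = 2 powr (p - 1) * (4 * (b\<^sup>2 + d\<^sup>2))"
    by (simp add: cost_C_z P_def v_def w_def power2_eq_square)
  ultimately show ?thesis by blast
qed

lemma exists_optimal_coupling_rho:
  assumes "\<bar>\<alpha>\<bar> \<le> 1" "\<bar>\<beta>\<bar> \<le> 1"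
  shows "\<exists>P \<in> couplings (rho \<alpha>) (rho \<beta>).
           cost P (C_z p) = 2 powr (p - 1) * (1 - sqrt (1 - max (\<alpha>\<^sup>2) (\<beta>\<^sup>2)))"
proof -
  define M where "M = max \<bar>\<alpha>\<bar> \<bar>\<beta>\<bar>"
  define s where "s = sqrt (1 - M\<^sup>2)"
  have M: "0 \<le> M" "M \<le> 1" "max (\<alpha>\<^sup>2) (\<beta>\<^sup>2) = M\<^sup>2"
    using assms by (auto simp: M_def max_def abs_le_square_iff)
  then have s: "0 \<le> s" "s \<le> 1" "s\<^sup>2 = 1 - M\<^sup>2"
    unfolding s_def by (simp_all add: power_le_one)
  have "(1 + s) / 4 * ((1 - s) / 4) = (M / 4)\<^sup>2"
    using s(3) by (simp add: power2_eq_square algebra_simps)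
  then have "sqrt ((1 + s) / 4 * ((1 - s) / 4)) = M / 4"
    using M(1) by simp
  moreover have "\<bar>\<alpha> + \<beta>\<bar> + \<bar>\<alpha> - \<beta>\<bar> = 2 * M"
    unfolding M_def by (simp add: abs_if max_def)
  ultimately have "\<bar>(\<alpha> + \<beta>) / 8\<bar> + \<bar>(\<alpha> - \<beta>) / 8\<bar> = sqrt ((1 + s) / 4 * ((1 - s) / 4))"
    by simp
  moreover have "0 \<le> (1 + s) / 4" "0 \<le> (1 - s) / 4"
    using s(1,2) by simp_all
  ultimately obtain a b c d where abcd: "a\<^sup>2 + c\<^sup>2 = (1 + s) / 4" "b\<^sup>2 + d\<^sup>2 = (1 - s) / 4"
    "a * b = (\<alpha> + \<beta>) / 8" "c * d = (\<alpha> - \<beta>) / 8"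
    using exists_factor_pairs by blast
  have "a\<^sup>2 + c\<^sup>2 + (b\<^sup>2 + d\<^sup>2) = 1 / 2" "\<alpha> = 4 * (a * b + c * d)" "\<beta> = 4 * (a * b - c * d)"
    using abcd by (simp_all add: field_simps)
  then obtain P where "P \<in> couplings (rho \<alpha>) (rho \<beta>)"
    and "cost P (C_z p) = 2 powr (p - 1) * (4 * (b\<^sup>2 + d\<^sup>2))"
    using exists_rank_two_coupling_rho by blast
  moreover have "4 * (b\<^sup>2 + d\<^sup>2) = 1 - s"
    using abcd(2) by simp
  ultimately show ?thesis unfolding s_def M(3) by auto
qed

theorem proposition3p5:
  fixes \<alpha> \<beta> p :: real
  assumes "-1 \<le> \<alpha>" "\<alpha> \<le> 1" "-1 \<le> \<beta>" "\<beta> \<le> 1" "1 \<le> p"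
  shows "(D_z p (rho \<alpha>) (rho \<beta>)) powr p
           = 2 powr (p - 1) * (1 - sqrt (1 - max (\<alpha>\<^sup>2) (\<beta>\<^sup>2)))"
proof -
  let ?V = "2 powr (p - 1) * (1 - sqrt (1 - max (\<alpha>\<^sup>2) (\<beta>\<^sup>2)))"
  have "\<bar>\<alpha>\<bar> \<le> 1" "\<bar>\<beta>\<bar> \<le> 1"
    using assms(1-4) by simp_all
  then obtain P where P: "P \<in> couplings (rho \<alpha>) (rho \<beta>)" "cost P (C_z p) = ?V"
    using exists_optimal_coupling_rho by blast
  have "Inf ((\<lambda>P. cost P (C_z p)) ` couplings (rho \<alpha>) (rho \<beta>)) = ?V"
    using P cost_C_z_lower_bound_rho by (intro cInf_eq_minimum) force+
  then show ?thesis
    using D_z_powr_eq_Inf_cost[of p "rho \<alpha>" "rho \<beta>"] P(1) assms(5) by auto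
qed

end
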